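(* Let $(X,\Sigma,\mu)$ be a measure space, $n\ge1$, $\mathbb{F}\in\{\mathbb{R},\mathbb{C}\}$, and $h\in L^2(X,\mu;\mathbb{F})$ with $h\neq0$. Define $T:L^2(X,\mu;\mathbb{F}^n)\to\mathbb{F}^n$ by $T(F)=\int_X h(x)f_x\,d\mu(x)$ for $F=(f_x)_{x\in X}$ (integral taken coordinatewise). Let $d\in\mathbb{F}^n$ and assume $\dim L^2(X,\mu;\mathbb{F})\ge n$ if $d\ne0$, and $\dim L^2(X,\mu;\mathbb{F})\ge n+1$ if $d=0$. Then $T^{-1}(\{d\})$ contains a continuous frame $\Phi\in\mathcal{F}^{\mathbb{F}}_{(X,\mu),n}$.
   Context: A family $\Phi=(\varphi_x)_{x\in X}$ in $\mathbb{F}^n$ (with measurable coordinates) is a continuous frame indexed by $(X,\mu)$ if there are $0<A\le B$ with $A\|v\|^2\le\int_X|\langle v,\varphi_x\rangle|^2d\mu(x)\le B\|v\|^2$ for all $v\in\mathbb{F}^n$. $\mathcal{F}^{\mathbb{F}}_{(X,\mu),n}$ denotes the set of such frames, viewed as a subset of $L^2(X,\mu;\mathbb{F}^n)$. (Recall: a family in $\mathbb{F}^n$ is a continuous frame iff it lies in $L^2(X,\mu;\mathbb{F}^n)$ and its coordinate functions $\Phi^k=(\varphi^k_x)_{x\in X}$, $k=1,\dots,n$, are linearly independent in $L^2(X,\mu;\mathbb{F})$.) *)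

theory Defs
  imports "HOL-Analysis.Analysis"
begin

definition square_integrable :: "'a measure \<Rightarrow> ('a \<Rightarrow> 'f::real_normed_vector) \<Rightarrow> bool" where
  "square_integrable M f \<longleftrightarrow>
     f \<in> borel_measurable M \<and> (\<integral>\<^sup>+ x. ennreal ((norm (f x))\<^sup>2) \<partial>M) < \<infinity>"

text \<open>dim L^2(X,mu;F) >= n: there are n elements of L^2 that are linearly independent
  modulo equality almost everywhere.\<close>
definition L2_dim_ge :: "'a measure \<Rightarrow> 'f::real_normed_field itself \<Rightarrow> nat \<Rightarrow> bool" where
  "L2_dim_ge M _ n \<longleftrightarrow>
     (\<exists>g :: nat \<Rightarrow> 'a \<Rightarrow> 'f. (\<forall>i<n. square_integrable M (g i)) \<and>
        (\<forall>c :: nat \<Rightarrow> 'f. (AE x in M. (\<Sum>i<n. c i * g i x) = 0) \<longrightarrow> (\<forall>i<n. c i = 0)))"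

text \<open>Inner product on F^n, <v,w> = sum_k v_k * cj(w_k), with cj the conjugation of F
  (identity for the reals, cnj for the complex numbers).\<close>
definition vinner :: "('f \<Rightarrow> 'f) \<Rightarrow> 'f::real_normed_field ^ 'n \<Rightarrow> 'f ^ 'n \<Rightarrow> 'f" where
  "vinner cj v w = (\<Sum>k\<in>UNIV. v $ k * cj (w $ k))"

definition cont_frame :: "('f \<Rightarrow> 'f) \<Rightarrow> 'a measure \<Rightarrow> ('a \<Rightarrow> 'f::real_normed_field ^ 'n) \<Rightarrow> bool" where
  "cont_frame cj M \<Phi> \<longleftrightarrow>
     (\<forall>k. (\<lambda>x. \<Phi> x $ k) \<in> borel_measurable M) \<and>
     (\<exists>A B::real. 0 < A \<and> A \<le> B \<and>
        (\<forall>v. ennreal (A * (norm v)\<^sup>2) \<le> (\<integral>\<^sup>+ x. ennreal ((norm (vinner cj v (\<Phi> x)))\<^sup>2) \<partial>M) \<and>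
             (\<integral>\<^sup>+ x. ennreal ((norm (vinner cj v (\<Phi> x)))\<^sup>2) \<partial>M) \<le> ennreal (B * (norm v)\<^sup>2)))"

definition synth_op :: "'a measure \<Rightarrow> ('a \<Rightarrow> 'f::{real_normed_field,banach,second_countable_topology})
    \<Rightarrow> ('a \<Rightarrow> 'f ^ 'n) \<Rightarrow> 'f ^ 'n" where
  "synth_op M h F = (\<chi> k. integral\<^sup>L M (\<lambda>x. h x * F x $ k))"

end

theory Submission
  imports Defs
begin

text \<open>
  Write \<open>\<ell>(g) = \<integral> h g d\<mu>\<close>; then \<open>T(\<Phi>) = d\<close> means \<open>\<ell>(\<Phi>\<^sup>k) = d\<^sub>k\<close> for every coordinate \<open>\<Phi>\<^sup>k\<close>, and
  \<open>\<Phi>\<close> is a frame iff its coordinates are square integrable and linearly independent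
  modulo null functions (the frame bounds are the extrema of the positive definite quadratic
  form \<open>a \<mapsto> \<parallel>\<Sum>\<^sub>k a\<^sub>k \<Phi>\<^sup>k\<parallel>\<^sup>2\<close> on the unit sphere).  So it suffices to find \<open>n\<close> independent
  functions with prescribed values of \<open>\<ell>\<close>.  Starting from an independent family \<open>g\<close>, shears
  \<open>g\<^sub>i \<mapsto> g\<^sub>i + a\<^sub>i g\<^sub>p\<close> with \<open>1 + a\<^sub>p \<noteq> 0\<close> keep independence and can adjust all values \<open>\<ell>(g\<^sub>i)\<close>
  once \<open>\<ell>(g\<^sub>p) \<noteq> 0\<close> and \<open>d\<^sub>p \<noteq> 0\<close>.  If \<open>d = 0\<close> one family member is sacrificed as the pivot,
  which is why \<open>n + 1\<close> dimensions are needed; if \<open>\<ell>\<close> vanishes on the whole family, one adds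
  multiples of the conjugate of \<open>h\<close>, on which \<open>\<ell>\<close> takes the value \<open>\<parallel>h\<parallel>\<^sup>2 \<noteq> 0\<close>.
\<close>

lemma square_integrable_iff:
  "square_integrable M f \<longleftrightarrow> f \<in> borel_measurable M \<and> integrable M (\<lambda>x. (norm (f x))\<^sup>2)"
proof -
  have "f \<in> borel_measurable M \<Longrightarrow> (\<lambda>x. (norm (f x))\<^sup>2) \<in> borel_measurable M"
    by measurable
  then show ?thesis
    unfolding square_integrable_def integrable_iff_bounded by auto
qed

lemma square_integrable_add:
  fixes f g :: "'a \<Rightarrow> 'f::{real_normed_field,euclidean_space}"
  assumes f: "square_integrable M f" and g: "square_integrable M g"
  shows "square_integrable M (\<lambda>x. f x + g x)"
proof -
  have "f \<in> borel_measurable M" "g \<in> borel_measurable M"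
    using f g by (simp_all add: square_integrable_iff)
  then have meas: "(\<lambda>x. f x + g x) \<in> borel_measurable M"
    by measurable
  have bound: "(norm (f x + g x))\<^sup>2 \<le> 2 * (norm (f x))\<^sup>2 + 2 * (norm (g x))\<^sup>2" for x
  proof -
    have "(norm (f x + g x))\<^sup>2 \<le> (norm (f x) + norm (g x))\<^sup>2"
      by (rule power_mono[OF norm_triangle_ineq norm_ge_zero])
    also have "\<dots> \<le> 2 * (norm (f x))\<^sup>2 + 2 * (norm (g x))\<^sup>2"
      using sum_squares_bound[of "norm (f x)" "norm (g x)"] by (simp add: power2_sum)
    finally show ?thesis .
  qed
  have "integrable M (\<lambda>x. (norm (f x + g x))\<^sup>2)"
  proof (rule Bochner_Integration.integrable_bound)
    show "integrable M (\<lambda>x. 2 * (norm (f x))\<^sup>2 + 2 * (norm (g x))\<^sup>2)"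
      using f g by (simp add: square_integrable_iff)
    show "(\<lambda>x. (norm (f x + g x))\<^sup>2) \<in> borel_measurable M"
      using meas by measurable
    show "AE x in M. norm ((norm (f x + g x))\<^sup>2) \<le> norm (2 * (norm (f x))\<^sup>2 + 2 * (norm (g x))\<^sup>2)"
      using bound by simp
  qed
  with meas show ?thesis
    by (simp add: square_integrable_iff)
qed

lemma square_integrable_mult_left:
  fixes f :: "'a \<Rightarrow> 'f::{real_normed_field,euclidean_space}"
  assumes "square_integrable M f"
  shows "square_integrable M (\<lambda>x. c * f x)"
proof -
  have "f \<in> borel_measurable M"
    using assms by (simp add: square_integrable_iff)
  then have "(\<lambda>x. c * f x) \<in> borel_measurable M"
    by measurable
  moreover have "integrable M (\<lambda>x. (norm c)\<^sup>2 * (norm (f x))\<^sup>2)"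
    using assms by (simp add: square_integrable_iff)
  ultimately show ?thesis
    by (simp add: square_integrable_iff norm_mult power_mult_distrib)
qed

lemma square_integrable_sum:
  fixes f :: "'i \<Rightarrow> 'a \<Rightarrow> 'f::{real_normed_field,euclidean_space}"
  assumes "\<And>i. i \<in> S \<Longrightarrow> square_integrable M (f i)"
  shows "square_integrable M (\<lambda>x. \<Sum>i\<in>S. f i x)"
  using assms
proof (induction S rule: infinite_finite_induct)
  case (insert i S)
  then show ?case
    by (simp add: square_integrable_add)
qed (simp_all add: square_integrable_iff)

lemma integrable_mult_square_integrable:
  fixes f g :: "'a \<Rightarrow> 'f::{real_normed_field,euclidean_space}"
  assumes f: "square_integrable M f" and g: "square_integrable M g"
  shows "integrable M (\<lambda>x. f x * g x)"
proof (rule Bochner_Integration.integrable_bound)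
  show "integrable M (\<lambda>x. (norm (f x))\<^sup>2 + (norm (g x))\<^sup>2)"
    using f g by (simp add: square_integrable_iff)
  have "f \<in> borel_measurable M" "g \<in> borel_measurable M"
    using f g by (simp_all add: square_integrable_iff)
  then show "(\<lambda>x. f x * g x) \<in> borel_measurable M"
    by measurable
  have "norm (f x) * norm (g x) \<le> (norm (f x))\<^sup>2 + (norm (g x))\<^sup>2" for x
    using sum_squares_bound[of "norm (f x)" "norm (g x)"]
      mult_nonneg_nonneg[OF norm_ge_zero norm_ge_zero, of "f x" "g x"] by linarith
  then show "AE x in M. norm (f x * g x) \<le> norm ((norm (f x))\<^sup>2 + (norm (g x))\<^sup>2)"
    by (simp add: norm_mult)
qed

lemma integral_mult_add_scaled:
  fixes h f g :: "'a \<Rightarrow> 'f::{real_normed_field,euclidean_space}"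
  assumes "square_integrable M h" "square_integrable M f" "square_integrable M g"
  shows "(\<integral>x. h x * (f x + c * g x) \<partial>M) = (\<integral>x. h x * f x \<partial>M) + c * (\<integral>x. h x * g x \<partial>M)"
  using integrable_mult_square_integrable[OF assms(1,2)]
    integrable_mult_square_integrable[OF assms(1,3)]
  by (simp add: distrib_left mult.left_commute)

lemma integral_mult_sum:
  fixes h :: "'a \<Rightarrow> 'f::{real_normed_field,euclidean_space}" and g :: "'i \<Rightarrow> 'a \<Rightarrow> 'f"
  assumes "square_integrable M h" "\<And>i. i \<in> S \<Longrightarrow> square_integrable M (g i)"
  shows "(\<integral>x. h x * (\<Sum>i\<in>S. c i * g i x) \<partial>M) = (\<Sum>i\<in>S. c i * (\<integral>x. h x * g i x \<partial>M))"
  using integrable_mult_square_integrable[OF assms(1) assms(2)]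
  by (simp add: sum_distrib_left mult.left_commute)

definition ae_independent :: "'a measure \<Rightarrow> 'i set \<Rightarrow> ('i \<Rightarrow> 'a \<Rightarrow> 'f::field) \<Rightarrow> bool" where
  "ae_independent M I g \<longleftrightarrow> (\<forall>c. (AE x in M. (\<Sum>i\<in>I. c i * g i x) = 0) \<longrightarrow> (\<forall>i\<in>I. c i = 0))"

lemma ae_independent_reindex:
  assumes \<sigma>: "bij_betw \<sigma> J I" and g: "ae_independent M I g"
  shows "ae_independent M J (\<lambda>j. g (\<sigma> j))"
  unfolding ae_independent_def
proof (intro allI impI)
  fix c assume ae: "AE x in M. (\<Sum>j\<in>J. c j * g (\<sigma> j) x) = 0"
  define c' where "c' i = c (the_inv_into J \<sigma> i)" for i
  have c'_\<sigma>: "c' (\<sigma> j) = c j" if "j \<in> J" for j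
    using \<sigma> that by (simp add: c'_def bij_betw_def the_inv_into_f_f)
  have "(\<Sum>j\<in>J. c j * g (\<sigma> j) x) = (\<Sum>i\<in>I. c' i * g i x)" for x
    using sum.reindex_bij_betw[OF \<sigma>, of "\<lambda>i. c' i * g i x"] by (simp add: c'_\<sigma>)
  with g ae have "\<forall>i\<in>I. c' i = 0"
    unfolding ae_independent_def by simp
  with \<sigma> show "\<forall>j\<in>J. c j = 0"
    by (metis bij_betwE c'_\<sigma>)
qed

lemma ae_independent_subset:
  assumes "finite I" "J \<subseteq> I" "ae_independent M I g"
  shows "ae_independent M J g"
  unfolding ae_independent_def
proof (intro allI impI)
  fix c assume ae: "AE x in M. (\<Sum>j\<in>J. c j * g j x) = 0"
  define c' where "c' i = (if i \<in> J then c i else 0)" for i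
  have "(\<Sum>i\<in>I. c' i * g i x) = (\<Sum>j\<in>J. c j * g j x)" for x
    using assms(1,2) by (intro sum.mono_neutral_cong_right) (auto simp: c'_def)
  with assms(3) ae have "\<forall>i\<in>I. c' i = 0"
    unfolding ae_independent_def by simp
  with assms(2) show "\<forall>j\<in>J. c j = 0"
    by (force simp: c'_def)
qed

text \<open>An elementary column operation: the transformation matrix \<open>I + a e\<^sub>p\<^sup>T\<close> has determinant \<open>1 + a\<^sub>p\<close>.\<close>

lemma ae_independent_shear:
  assumes I: "finite I" "p \<in> I" and ap: "1 + a p \<noteq> 0" and g: "ae_independent M I g"
  shows "ae_independent M I (\<lambda>i x. g i x + a i * g p x)"
  unfolding ae_independent_def
proof (intro allI impI)
  fix c assume ae: "AE x in M. (\<Sum>i\<in>I. c i * (g i x + a i * g p x)) = 0"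
  define C where "C = (\<Sum>i\<in>I. c i * a i)"
  define b where "b i = c i + (if i = p then C else 0)" for i
  have "(\<Sum>i\<in>I. c i * (g i x + a i * g p x)) = (\<Sum>i\<in>I. b i * g i x)" for x
  proof -
    have "(\<Sum>i\<in>I. c i * (g i x + a i * g p x)) = (\<Sum>i\<in>I. c i * g i x) + C * g p x"
      by (simp add: C_def distrib_left sum.distrib sum_distrib_left sum_distrib_right mult_ac)
    also have "\<dots> = (\<Sum>i\<in>I. c i * g i x + (if i = p then C * g i x else 0))"
      using I by (simp add: sum.distrib)
    also have "\<dots> = (\<Sum>i\<in>I. b i * g i x)"
      by (intro sum.cong) (auto simp: b_def distrib_right)
    finally show ?thesis .
  qed
  with g ae have b0: "\<forall>i\<in>I. b i = 0"
    unfolding ae_independent_def by simp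
  then have c0: "c i = 0" if "i \<in> I" "i \<noteq> p" for i
    using that by (auto simp: b_def)
  have "C = c p * a p"
    using I unfolding C_def by (subst sum.remove) (auto simp: c0)
  moreover have "b p = 0"
    using b0 I by blast
  ultimately have "c p * (1 + a p) = 0"
    by (simp add: b_def algebra_simps)
  with ap c0 show "\<forall>i\<in>I. c i = 0"
    by auto
qed

lemma ae_independent_add_outside_kernel:
  fixes h u :: "'a \<Rightarrow> 'f::{real_normed_field,euclidean_space}" and g :: "'i \<Rightarrow> 'a \<Rightarrow> 'f"
  assumes "finite I" and h: "square_integrable M h" and u: "square_integrable M u"
    and g: "\<And>i. i \<in> I \<Longrightarrow> square_integrable M (g i)"
    and ker: "\<And>i. i \<in> I \<Longrightarrow> (\<integral>x. h x * g i x \<partial>M) = 0"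
    and hu: "(\<integral>x. h x * u x \<partial>M) \<noteq> 0"
    and indep: "ae_independent M I g"
  shows "ae_independent M I (\<lambda>i x. g i x + a i * u x)"
  unfolding ae_independent_def
proof (intro allI impI)
  fix c assume ae: "AE x in M. (\<Sum>i\<in>I. c i * (g i x + a i * u x)) = 0"
  define C where "C = (\<Sum>i\<in>I. c i * a i)"
  have comb: "(\<Sum>i\<in>I. c i * (g i x + a i * u x)) = (\<Sum>i\<in>I. c i * g i x) + C * u x" for x
    by (simp add: C_def distrib_left sum.distrib sum_distrib_left sum_distrib_right mult_ac)
  have "0 = (\<integral>x. h x * ((\<Sum>i\<in>I. c i * g i x) + C * u x) \<partial>M)"
    using ae by (auto simp: comb intro!: integral_eq_zero_AE elim: eventually_mono)
  also have "\<dots> = C * (\<integral>x. h x * u x \<partial>M)"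
    by (simp add: integral_mult_add_scaled h u square_integrable_sum
        square_integrable_mult_left g integral_mult_sum ker)
  finally have "C = 0"
    using hu by simp
  with ae comb have "AE x in M. (\<Sum>i\<in>I. c i * g i x) = 0"
    by simp
  with indep show "\<forall>i\<in>I. c i = 0"
    unfolding ae_independent_def by blast
qed

lemma exists_ae_independent_pivot:
  fixes h :: "'a \<Rightarrow> 'f::{real_normed_field,euclidean_space}" and g :: "'i \<Rightarrow> 'a \<Rightarrow> 'f"
  assumes I: "finite I" "p \<in> I" "k \<in> I" and h: "square_integrable M h"
    and g: "\<And>i. i \<in> I \<Longrightarrow> square_integrable M (g i)" and indep: "ae_independent M I g"
    and gk: "(\<integral>x. h x * g k x \<partial>M) \<noteq> 0"
  obtains g' where "\<And>i. i \<in> I \<Longrightarrow> square_integrable M (g' i)" "ae_independent M I g'"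
    "(\<integral>x. h x * g' p x \<partial>M) \<noteq> 0"
proof (cases "(\<integral>x. h x * g p x \<partial>M) = 0")
  case True
  define a :: "'i \<Rightarrow> 'f" where "a i = (if i = p then 1 else 0)" for i
  have "k \<noteq> p"
    using True gk by auto
  have "square_integrable M (\<lambda>x. g i x + a i * g k x)" if "i \<in> I" for i
    using that I by (intro square_integrable_add square_integrable_mult_left g)
  moreover have "ae_independent M I (\<lambda>i x. g i x + a i * g k x)"
    using \<open>k \<noteq> p\<close> I indep by (intro ae_independent_shear) (simp_all add: a_def)
  moreover have "(\<integral>x. h x * (g p x + a p * g k x) \<partial>M) \<noteq> 0"
    using I True gk integral_mult_add_scaled[OF h g[of p] g[of k], of 1] by (simp add: a_def)
  ultimately show ?thesis
    by (rule that)
qed (use g indep in blast)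

lemma exists_ae_independent_prescribed_pairings:
  fixes h u :: "'a \<Rightarrow> 'f::{real_normed_field,euclidean_space}"
    and g :: "'i \<Rightarrow> 'a \<Rightarrow> 'f" and d :: "'i \<Rightarrow> 'f"
  assumes I: "finite I" "p \<in> I" and dp: "d p \<noteq> 0"
    and h: "square_integrable M h" and u: "square_integrable M u"
    and hu: "(\<integral>x. h x * u x \<partial>M) \<noteq> 0"
    and g: "\<And>i. i \<in> I \<Longrightarrow> square_integrable M (g i)" and indep: "ae_independent M I g"
  shows "\<exists>f. (\<forall>i\<in>I. square_integrable M (f i)) \<and> ae_independent M I f \<and>
             (\<forall>i\<in>I. (\<integral>x. h x * f i x \<partial>M) = d i)"
proof (cases "\<exists>k\<in>I. (\<integral>x. h x * g k x \<partial>M) \<noteq> 0")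
  case True
  then obtain k where "k \<in> I" "(\<integral>x. h x * g k x \<partial>M) \<noteq> 0"
    by blast
  then obtain g' where g': "\<And>i. i \<in> I \<Longrightarrow> square_integrable M (g' i)"
    and indep': "ae_independent M I g'" and L: "(\<integral>x. h x * g' p x \<partial>M) \<noteq> 0"
    using exists_ae_independent_pivot[OF I \<open>k \<in> I\<close> h g indep] by blast
  define a where "a i = (d i - (\<integral>x. h x * g' i x \<partial>M)) / (\<integral>x. h x * g' p x \<partial>M)" for i
  have "1 + a p = d p / (\<integral>x. h x * g' p x \<partial>M)"
    using L by (simp add: a_def field_simps)
  then have "ae_independent M I (\<lambda>i x. g' i x + a i * g' p x)"
    using I dp L indep' by (intro ae_independent_shear) auto
  moreover have "(\<integral>x. h x * (g' i x + a i * g' p x) \<partial>M) = d i" if "i \<in> I" for i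
    using L integral_mult_add_scaled[OF h g'[OF that] g'[OF I(2)], of "a i"] by (simp add: a_def)
  ultimately show ?thesis
    using I by (intro exI[of _ "\<lambda>i x. g' i x + a i * g' p x"])
      (auto intro!: square_integrable_add square_integrable_mult_left g')
next
  case False
  define a where "a i = d i / (\<integral>x. h x * u x \<partial>M)" for i
  have "ae_independent M I (\<lambda>i x. g i x + a i * u x)"
    using False by (intro ae_independent_add_outside_kernel[OF I(1) h u g _ hu indep]) auto
  moreover have "(\<integral>x. h x * (g i x + a i * u x) \<partial>M) = d i" if "i \<in> I" for i
    using that False hu integral_mult_add_scaled[OF h g[OF that] u, of "a i"] by (simp add: a_def)
  ultimately show ?thesis
    by (intro exI[of _ "\<lambda>i x. g i x + a i * u x"])
      (auto intro!: square_integrable_add square_integrable_mult_left g u)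
qed

lemma exists_ae_independent_zero_pairings:
  fixes h :: "'a \<Rightarrow> 'f::{real_normed_field,euclidean_space}" and g :: "'i \<Rightarrow> 'a \<Rightarrow> 'f"
  assumes I: "finite I" "j \<notin> I" and h: "square_integrable M h"
    and g: "\<And>i. i \<in> insert j I \<Longrightarrow> square_integrable M (g i)"
    and indep: "ae_independent M (insert j I) g"
  shows "\<exists>f. (\<forall>i\<in>I. square_integrable M (f i)) \<and> ae_independent M I f \<and>
             (\<forall>i\<in>I. (\<integral>x. h x * f i x \<partial>M) = 0)"
proof (cases "\<exists>k\<in>insert j I. (\<integral>x. h x * g k x \<partial>M) \<noteq> 0")
  case True
  then obtain k where k: "k \<in> insert j I" "(\<integral>x. h x * g k x \<partial>M) \<noteq> 0"
    by blast
  have "finite (insert j I)"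
    using I by simp
  then obtain g' where g': "\<And>i. i \<in> insert j I \<Longrightarrow> square_integrable M (g' i)"
    and indep': "ae_independent M (insert j I) g'" and L: "(\<integral>x. h x * g' j x \<partial>M) \<noteq> 0"
    using exists_ae_independent_pivot[OF _ insertI1 k(1) h g indep k(2)] by blast
  define a where "a i = (if i = j then 0 else - (\<integral>x. h x * g' i x \<partial>M) / (\<integral>x. h x * g' j x \<partial>M))"
    for i
  have "ae_independent M (insert j I) (\<lambda>i x. g' i x + a i * g' j x)"
    using I indep' by (intro ae_independent_shear) (auto simp: a_def)
  then have "ae_independent M I (\<lambda>i x. g' i x + a i * g' j x)"
    by (rule ae_independent_subset[rotated 2]) (use I in auto)
  moreover have "(\<integral>x. h x * (g' i x + a i * g' j x) \<partial>M) = 0" if "i \<in> I" for i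
  proof -
    have "i \<noteq> j"
      using that I by auto
    with that L show ?thesis
      using integral_mult_add_scaled[OF h g'[of i] g'[of j], of "a i"] by (simp add: a_def)
  qed
  ultimately show ?thesis
    by (intro exI[of _ "\<lambda>i x. g' i x + a i * g' j x"])
      (auto intro!: square_integrable_add square_integrable_mult_left g')
next
  case False
  have "ae_independent M I g"
    using I by (intro ae_independent_subset[OF _ _ indep]) auto
  with False g show ?thesis
    by (intro exI[of _ g]) auto
qed

lemma L2_dim_ge_obtains_ae_independent:
  fixes J :: "'j set"
  assumes "finite J" "L2_dim_ge M TYPE('f) (card J)"
  obtains g :: "'j \<Rightarrow> 'a \<Rightarrow> 'f::real_normed_field"
  where "\<And>j. j \<in> J \<Longrightarrow> square_integrable M (g j)" "ae_independent M J g"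
proof -
  obtain g :: "nat \<Rightarrow> 'a \<Rightarrow> 'f" where g: "\<forall>i<card J. square_integrable M (g i)"
    and indep: "\<forall>c. (AE x in M. (\<Sum>i<card J. c i * g i x) = 0) \<longrightarrow> (\<forall>i<card J. c i = 0)"
    using assms(2) unfolding L2_dim_ge_def by blast
  then have indep: "ae_independent M {..<card J} g"
    by (simp add: ae_independent_def)
  obtain \<sigma> where \<sigma>: "bij_betw \<sigma> J {..<card J}"
    using ex_bij_betw_finite_nat[OF assms(1)] by (auto simp: lessThan_atLeast0)
  show ?thesis
  proof
    show "square_integrable M (g (\<sigma> j))" if "j \<in> J" for j
      using g bij_betwE[OF \<sigma>] that by blast
    show "ae_independent M J (\<lambda>j. g (\<sigma> j))"
      by (rule ae_independent_reindex[OF \<sigma> indep])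
  qed
qed

lemma exists_ae_independent_synthesis:
  fixes h u :: "'a \<Rightarrow> 'f::{real_normed_field,euclidean_space}" and d :: "'f ^ 'n::finite"
  assumes h: "square_integrable M h" and u: "square_integrable M u"
    and hu: "(\<integral>x. h x * u x \<partial>M) \<noteq> 0"
    and dim: "d \<noteq> 0 \<longrightarrow> L2_dim_ge M TYPE('f) CARD('n)"
      "d = 0 \<longrightarrow> L2_dim_ge M TYPE('f) (CARD('n) + 1)"
  obtains f :: "'n \<Rightarrow> 'a \<Rightarrow> 'f" where "\<And>k. square_integrable M (f k)"
    "ae_independent M UNIV f" "\<And>k. (\<integral>x. h x * f k x \<partial>M) = d $ k"
proof (cases "d = 0")
  case True
  have "card (UNIV :: 'n option set) = CARD('n) + 1"
    by (simp add: UNIV_option_conv card_image)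
  then obtain g :: "'n option \<Rightarrow> 'a \<Rightarrow> 'f" where g: "\<And>i. square_integrable M (g i)"
    and indep: "ae_independent M (insert None (range Some)) g"
    using L2_dim_ge_obtains_ae_independent[of UNIV M] True dim
    by (metis UNIV_option_conv finite UNIV_I)
  have "\<exists>f :: 'n option \<Rightarrow> 'a \<Rightarrow> 'f. (\<forall>i\<in>range Some. square_integrable M (f i)) \<and> ae_independent M (range Some) f \<and>
      (\<forall>i\<in>range Some. (\<integral>x. h x * f i x \<partial>M) = 0)"
    by (rule exists_ae_independent_zero_pairings[OF _ _ h _ indep]) (auto simp: g)
  then obtain f :: "'n option \<Rightarrow> 'a \<Rightarrow> 'f" where f: "\<forall>i\<in>range Some. square_integrable M (f i)"
    "ae_independent M (range Some) f" "\<forall>i\<in>range Some. (\<integral>x. h x * f i x \<partial>M) = 0"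
    by blast
  have "ae_independent M UNIV (\<lambda>k. f (Some k))"
    by (rule ae_independent_reindex[OF _ f(2)]) (simp add: bij_betw_def)
  with f True show ?thesis
    by (intro that[of "\<lambda>k. f (Some k)"]) auto
next
  case False
  then obtain p where p: "d $ p \<noteq> 0"
    by (auto simp: vec_eq_iff)
  have dim_n: "L2_dim_ge M TYPE('f) (card (UNIV :: 'n set))"
    using False dim by simp
  obtain g :: "'n \<Rightarrow> 'a \<Rightarrow> 'f" where g: "\<And>i. square_integrable M (g i)"
    and indep: "ae_independent M UNIV g"
    using L2_dim_ge_obtains_ae_independent[OF _ dim_n] by auto
  have "\<exists>f :: 'n \<Rightarrow> 'a \<Rightarrow> 'f. (\<forall>k\<in>UNIV. square_integrable M (f k)) \<and> ae_independent M UNIV f \<and>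
      (\<forall>k\<in>UNIV. (\<integral>x. h x * f k x \<partial>M) = d $ k)"
    by (rule exists_ae_independent_prescribed_pairings[where d="\<lambda>k. d $ k", OF _ _ p h u hu _ indep])
      (simp_all add: g)
  then show ?thesis
    using that by blast
qed

lemma homogeneous_quadratic_bounds:
  fixes q :: "'v::{real_normed_vector,heine_borel} \<Rightarrow> real"
  assumes cont: "continuous_on UNIV q" and hom: "\<And>r v. q (r *\<^sub>R v) = r\<^sup>2 * q v"
    and pos: "\<And>v. v \<noteq> 0 \<Longrightarrow> 0 < q v"
  obtains A B where "0 < A" "A \<le> B" "\<And>v. A * (norm v)\<^sup>2 \<le> q v \<and> q v \<le> B * (norm v)\<^sup>2"
proof (cases "\<exists>v::'v. v \<noteq> 0")
  case True
  then obtain v :: 'v where "v \<noteq> 0"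
    by blast
  then have "sgn v \<in> sphere 0 1"
    by (simp add: norm_sgn)
  then have ne: "sphere (0::'v) 1 \<noteq> {}"
    by blast
  have "sphere (0::'v) 1 = cball 0 1 - ball 0 1"
    by auto
  then have "closed (sphere (0::'v) 1)"
    by (simp add: closed_Diff)
  then have cpt: "compact (sphere (0::'v) 1)"
    using bounded_subset[OF bounded_cball sphere_cball] by (simp add: compact_eq_bounded_closed)
  obtain a0 where a0: "a0 \<in> sphere 0 1" "\<And>v. v \<in> sphere 0 1 \<Longrightarrow> q a0 \<le> q v"
    using continuous_attains_inf[OF cpt ne continuous_on_subset[OF cont subset_UNIV]] by blast
  obtain a1 where a1: "\<And>v. v \<in> sphere 0 1 \<Longrightarrow> q v \<le> q a1"
    using continuous_attains_sup[OF cpt ne continuous_on_subset[OF cont subset_UNIV]] by blast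
  have "q a0 * (norm w)\<^sup>2 \<le> q w \<and> q w \<le> q a1 * (norm w)\<^sup>2" for w
  proof (cases "w = 0")
    case True
    then show ?thesis
      using hom[of 0 0] by simp
  next
    case False
    then have "sgn w \<in> sphere 0 1" and "q w = (norm w)\<^sup>2 * q (sgn w)"
      using hom[of "norm w" "sgn w"] by (simp_all add: norm_sgn sgn_div_norm)
    then show ?thesis
      using a0(2) a1 by (simp add: mult.commute mult_right_mono)
  qed
  moreover have "0 < q a0"
    using a0(1) by (intro pos) auto
  ultimately show ?thesis
    using a1 a0(1) by (intro that[of "q a0" "q a1"]) auto
next
  case False
  then have "v = 0" for v :: 'v
    by blast
  then have "q v = (norm v)\<^sup>2" for v
    using hom[of 0 0] by (metis norm_zero power_zero_numeral scale_zero_left mult_zero_left)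
  then show ?thesis
    by (intro that[of 1 1]) auto
qed

locale conjugation =
  fixes cj :: "'f::{real_normed_field,euclidean_space} \<Rightarrow> 'f"
  assumes cj_add: "cj (a + b) = cj a + cj b"
    and cj_mult: "cj (a * b) = cj a * cj b"
    and cj_cj [simp]: "cj (cj a) = a"
    and norm_cj [simp]: "norm (cj a) = norm a"
    and cj_scaleR: "cj (r *\<^sub>R a) = r *\<^sub>R cj a"
    and mult_cj_self: "a * cj a = of_real ((norm a)\<^sup>2)"
begin

lemma bounded_linear_cj: "bounded_linear cj"
  by (rule bounded_linear_intro[where K = 1]) (simp_all add: cj_add cj_scaleR)

lemma continuous_on_cj [continuous_intros]:
  "continuous_on S f \<Longrightarrow> continuous_on S (\<lambda>x. cj (f x))"
  using bounded_linear.continuous_on[OF bounded_linear_cj] by blast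

lemma borel_measurable_cj [measurable]:
  "f \<in> borel_measurable M \<Longrightarrow> (\<lambda>x. cj (f x)) \<in> borel_measurable M"
  by (rule measurable_compose[OF _ borel_measurable_continuous_onI])
    (auto intro: continuous_on_cj continuous_on_id)

lemma cj_sum: "cj (\<Sum>i\<in>S. f i) = (\<Sum>i\<in>S. cj (f i))"
  using linear_sum[OF bounded_linear.linear[OF bounded_linear_cj]] .

lemma square_integrable_cj: "square_integrable M f \<Longrightarrow> square_integrable M (\<lambda>x. cj (f x))"
  by (simp add: square_integrable_iff borel_measurable_cj)

lemma integral_mult_cj_self:
  assumes "square_integrable M f"
  shows "(\<integral>x. f x * cj (f x) \<partial>M) = of_real (\<integral>x. (norm (f x))\<^sup>2 \<partial>M)"
  unfolding mult_cj_self
  by (rule integral_of_real) (use assms in \<open>simp add: square_integrable_iff\<close>)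

lemma integral_mult_cj_self_nonzero:
  assumes f: "square_integrable M f" and nonnull: "\<not> (AE x in M. f x = 0)"
  shows "(\<integral>x. f x * cj (f x) \<partial>M) \<noteq> 0"
proof
  assume "(\<integral>x. f x * cj (f x) \<partial>M) = 0"
  then have "(\<integral>x. (norm (f x))\<^sup>2 \<partial>M) = 0"
    by (simp add: integral_mult_cj_self[OF f])
  moreover have "integrable M (\<lambda>x. (norm (f x))\<^sup>2)"
    using f by (simp add: square_integrable_iff)
  ultimately have "AE x in M. (norm (f x))\<^sup>2 = 0"
    by (simp add: integral_nonneg_eq_0_iff_AE)
  with nonnull show False
    by simp
qed

text \<open>Expanding \<open>\<parallel>\<Sum>\<^sub>k a\<^sub>k \<phi>\<^sub>k\<parallel>\<^sup>2\<close> against the Gram matrix \<open>\<integral> \<phi>\<^sub>k cj(\<phi>\<^sub>l)\<close> exhibits it as a polynomial in \<open>a\<close> and \<open>cj a\<close>.\<close>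

lemma continuous_on_integral_norm_combination:
  fixes \<phi> :: "'n::finite \<Rightarrow> 'a \<Rightarrow> 'f"
  assumes \<phi>: "\<And>k. square_integrable M (\<phi> k)"
  shows "continuous_on UNIV (\<lambda>a::'f ^ 'n. \<integral>x. (norm (\<Sum>k\<in>UNIV. a $ k * \<phi> k x))\<^sup>2 \<partial>M)"
proof -
  define G where "G k l = (\<integral>x. \<phi> k x * cj (\<phi> l x) \<partial>M)" for k l
  have "(\<integral>x. (norm (\<Sum>k\<in>UNIV. a $ k * \<phi> k x))\<^sup>2 \<partial>M)
      = norm (\<Sum>k\<in>UNIV. \<Sum>l\<in>UNIV. a $ k * cj (a $ l) * G k l)" for a :: "'f ^ 'n"
  proof -
    let ?S = "\<lambda>x. \<Sum>k\<in>UNIV. a $ k * \<phi> k x"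
    have "square_integrable M ?S"
      by (intro square_integrable_sum square_integrable_mult_left \<phi>)
    then have "of_real (\<integral>x. (norm (?S x))\<^sup>2 \<partial>M) = (\<integral>x. ?S x * cj (?S x) \<partial>M)"
      by (simp add: integral_mult_cj_self)
    also have "\<dots> = (\<integral>x. (\<Sum>k\<in>UNIV. \<Sum>l\<in>UNIV. a $ k * cj (a $ l) * (\<phi> k x * cj (\<phi> l x))) \<partial>M)"
      by (simp add: cj_sum cj_mult sum_product mult_ac)
    also have "\<dots> = (\<Sum>k\<in>UNIV. \<Sum>l\<in>UNIV. a $ k * cj (a $ l) * G k l)"
      by (simp add: G_def integrable_mult_square_integrable \<phi> square_integrable_cj)
    finally have "norm (of_real (\<integral>x. (norm (?S x))\<^sup>2 \<partial>M) :: 'f)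
        = norm (\<Sum>k\<in>UNIV. \<Sum>l\<in>UNIV. a $ k * cj (a $ l) * G k l)"
      by (rule arg_cong)
    then show ?thesis
      by simp
  qed
  then show ?thesis
    by (simp only:) (intro continuous_intros)
qed

lemma cont_frame_if_ae_independent:
  fixes \<Phi> :: "'a \<Rightarrow> 'f ^ 'n::finite"
  assumes si: "\<And>k. square_integrable M (\<lambda>x. \<Phi> x $ k)"
    and indep: "ae_independent M UNIV (\<lambda>k x. \<Phi> x $ k)"
  shows "cont_frame cj M \<Phi>"
proof -
  define q where "q a = (\<integral>x. (norm (\<Sum>k\<in>UNIV. a $ k * \<Phi> x $ k))\<^sup>2 \<partial>M)" for a :: "'f ^ 'n"
  have "square_integrable M (\<lambda>x. \<Sum>k\<in>UNIV. a $ k * \<Phi> x $ k)" for a :: "'f ^ 'n"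
    by (intro square_integrable_sum square_integrable_mult_left si)
  then have int: "integrable M (\<lambda>x. (norm (\<Sum>k\<in>UNIV. a $ k * \<Phi> x $ k))\<^sup>2)" for a :: "'f ^ 'n"
    by (simp add: square_integrable_iff)
  have cont: "continuous_on UNIV q"
    unfolding q_def using continuous_on_integral_norm_combination[OF si] .
  have hom: "q (r *\<^sub>R a) = r\<^sup>2 * q a" for r a
    by (simp add: q_def power_mult_distrib flip: scaleR_sum_right)
  have pos: "0 < q a" if "a \<noteq> 0" for a
  proof (rule ccontr)
    assume "\<not> 0 < q a"
    then have "q a = 0"
      by (simp add: q_def order.antisym)
    then have "AE x in M. (\<Sum>k\<in>UNIV. a $ k * \<Phi> x $ k) = 0"
      using integral_nonneg_eq_0_iff_AE[OF int] by (simp add: q_def)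
    with indep have "a = 0"
      by (simp add: ae_independent_def vec_eq_iff)
    with that show False ..
  qed
  obtain A B where AB: "0 < A" "A \<le> B"
    and bounds: "\<And>v. A * (norm v)\<^sup>2 \<le> q v \<and> q v \<le> B * (norm v)\<^sup>2"
    using homogeneous_quadratic_bounds[OF cont hom pos] by blast
  have frame_sum: "(\<integral>\<^sup>+ x. ennreal ((norm (vinner cj v (\<Phi> x)))\<^sup>2) \<partial>M) = ennreal (q (\<chi> k. cj (v $ k)))"
    for v
  proof -
    have "norm (vinner cj v (\<Phi> x)) = norm (\<Sum>k\<in>UNIV. (\<chi> k. cj (v $ k)) $ k * \<Phi> x $ k)" for x
      by (subst norm_cj[symmetric]) (simp add: vinner_def cj_sum cj_mult)
    then show ?thesis
      using nn_integral_eq_integral[OF int[of "\<chi> k. cj (v $ k)"]] by (simp add: q_def)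
  qed
  have norm_cj_vec: "norm (\<chi> k. cj (v $ k)) = norm v" for v
    by (simp add: norm_vec_def)
  have "(\<lambda>x. \<Phi> x $ k) \<in> borel_measurable M" for k
    using si by (simp add: square_integrable_iff)
  moreover have "ennreal (A * (norm v)\<^sup>2) \<le> ennreal (q (\<chi> k. cj (v $ k))) \<and>
      ennreal (q (\<chi> k. cj (v $ k))) \<le> ennreal (B * (norm v)\<^sup>2)" for v
    using bounds[of "\<chi> k. cj (v $ k)"] unfolding norm_cj_vec by (auto intro: ennreal_leI)
  ultimately show ?thesis
    unfolding cont_frame_def frame_sum using AB by blast
qed

lemma synthesis_preimage_contains_frame:
  fixes h :: "'a \<Rightarrow> 'f" and d :: "'f ^ 'n::finite"
  assumes h: "square_integrable M h" and nonnull: "\<not> (AE x in M. h x = 0)"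
    and dim: "d \<noteq> 0 \<longrightarrow> L2_dim_ge M TYPE('f) CARD('n)"
      "d = 0 \<longrightarrow> L2_dim_ge M TYPE('f) (CARD('n) + 1)"
  shows "\<exists>\<Phi>. cont_frame cj M \<Phi> \<and> synth_op M h \<Phi> = d"
proof -
  obtain f :: "'n \<Rightarrow> 'a \<Rightarrow> 'f" where f: "\<And>k. square_integrable M (f k)"
    and indep: "ae_independent M UNIV f" and pairing: "\<And>k. (\<integral>x. h x * f k x \<partial>M) = d $ k"
    using exists_ae_independent_synthesis[OF h square_integrable_cj[OF h]
        integral_mult_cj_self_nonzero[OF h nonnull] dim] by blast
  define \<Phi> where "\<Phi> x = (\<chi> k. f k x)" for x
  have "cont_frame cj M \<Phi>"
    by (rule cont_frame_if_ae_independent) (simp_all add: \<Phi>_def f indep)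
  moreover have "synth_op M h \<Phi> = d"
    by (simp add: synth_op_def \<Phi>_def vec_eq_iff pairing)
  ultimately show ?thesis
    by blast
qed

end

interpretation real_conjugation: conjugation "\<lambda>x::real. x"
  by unfold_locales (simp_all add: power2_eq_square)

interpretation complex_conjugation: conjugation cnj
  by unfold_locales (simp_all add: complex_norm_square[symmetric] complex_cnj_scaleR)

theorem corollary5p6:
  fixes M :: "'a measure"
    and hr :: "'a \<Rightarrow> real" and dr :: "real ^ 'n::finite"
    and hc :: "'a \<Rightarrow> complex" and dc :: "complex ^ 'n::finite"
  shows
   "(square_integrable M hr \<and> \<not> (AE x in M. hr x = 0) \<and>
     (dr \<noteq> 0 \<longrightarrow> L2_dim_ge M TYPE(real) CARD('n)) \<and>
     (dr = 0 \<longrightarrow> L2_dim_ge M TYPE(real) (CARD('n) + 1))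
     \<longrightarrow> (\<exists>\<Phi> :: 'a \<Rightarrow> real ^ 'n. cont_frame (\<lambda>z. z) M \<Phi> \<and> synth_op M hr \<Phi> = dr))
    \<and>
    (square_integrable M hc \<and> \<not> (AE x in M. hc x = 0) \<and>
     (dc \<noteq> 0 \<longrightarrow> L2_dim_ge M TYPE(complex) CARD('n)) \<and>
     (dc = 0 \<longrightarrow> L2_dim_ge M TYPE(complex) (CARD('n) + 1))
     \<longrightarrow> (\<exists>\<Phi> :: 'a \<Rightarrow> complex ^ 'n. cont_frame cnj M \<Phi> \<and> synth_op M hc \<Phi> = dc))"
  using real_conjugation.synthesis_preimage_contains_frame[of M hr dr]
    complex_conjugation.synthesis_preimage_contains_frame[of M hc dc]
  by blast

end
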